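(* Let $K$ be an algebraically closed field of characteristic zero, $\mathcal{K} = K(t)$, and let $\beta \in \mathcal{K}$ with $h(\beta) = 1$ or $h(\beta) = 2$. Let \[\Phi_1(z,t) = z^2 - z + t,\] \[\Phi_3(z,t) = z^6 + z^5 + (3t+1)z^4 + (2t+1)z^3 + (3t^2+3t+1)z^2 + (t+1)^2 z + t^3 + 2t^2 + t + 1.\] Then there exists $c \in K$ such that $\Phi_3(\beta,t)$ vanishes at the place $t = c$ but neither $\Phi_1(\beta,t)$ nor $\beta$ vanishes at $t=c$.
   Context: The height $h(\beta)$ of $\beta \in K(t)$ is its degree as a rational function in $t$ (maximum of the degrees of numerator and denominator in lowest terms). An element of $K(t)$ vanishes at the place $t=c$ if its order of vanishing at $t=c$ is positive. ($\Phi_1,\Phi_3$ are the first and third dynatomic polynomials of $z^2+t$.) *)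

theory Defs
  imports "HOL-Computational_Algebra.Polynomial" "HOL-Computational_Algebra.Fraction_Field"
begin

type_synonym 'a ratfun = "'a poly fract"

definition T :: "'a::field ratfun" where
  "T = Fract [:0, 1:] 1"

definition height :: "'a::field ratfun \<Rightarrow> nat" where
  "height x = (THE n. \<exists>p q. q \<noteq> 0 \<and> coprime p q \<and> x = Fract p q \<and>
                             n = max (degree p) (degree q))"

text \<open>Order of vanishing at t = c is positive (the zero function vanishes everywhere).
  For a nonzero x = p/q the order at c is order c p - order c q, which is independent
  of the chosen representation.\<close>
definition vanishes_at :: "'a::field \<Rightarrow> 'a ratfun \<Rightarrow> bool" where
  "vanishes_at c x \<longleftrightarrow> x = 0 \<or>
     (\<exists>p q. p \<noteq> 0 \<and> q \<noteq> 0 \<and> x = Fract p q \<and> int (order c p) - int (order c q) > 0)"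

definition Phi1 :: "'a::field ratfun \<Rightarrow> 'a ratfun" where
  "Phi1 z = z^2 - z + T"

definition Phi3 :: "'a::field ratfun \<Rightarrow> 'a ratfun" where
  "Phi3 z = z^6 + z^5 + (3*T + 1) * z^4 + (2*T + 1) * z^3 + (3*T^2 + 3*T + 1) * z^2
            + (T + 1)^2 * z + T^3 + 2*T^2 + T + 1"

end

theory Submission
  imports Defs "HOL-Computational_Algebra.Polynomial_Factorial"
begin

text \<open>Write \<open>\<beta> = p/q\<close> in lowest terms and let \<open>H = q\<^sup>6 \<Phi>\<^sub>3(p/q, t) \<in> K[t]\<close>,
  a polynomial of degree \<open>max (6 deg p) (6 deg q + 3)\<close>. If the claim failed, every zero \<open>c\<close>
  of \<open>H\<close> would be a zero of \<open>p\<close> or of the numerator \<open>p\<^sup>2 - pq + tq\<^sup>2\<close> of \<open>\<Phi>\<^sub>1(\<beta>)\<close>.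
  In the second case a period-3 cycle of \<open>z\<^sup>2 + c\<close> collides with a fixed point: then
  \<open>16c\<^sup>2 + 4c + 7 = 0\<close> and \<open>c\<close> is a simple zero of \<open>H\<close>. In the first case
  \<open>c\<^sup>3 + 2c\<^sup>2 + c + 1 = 0\<close>, the curve \<open>\<Phi>\<^sub>3 = 0\<close> has a smooth branch \<open>z = U(t)\<close> through
  \<open>(0, c)\<close>, and the multiplicity of \<open>c\<close> in \<open>H\<close> is the order of contact of \<open>p/q\<close> with \<open>U\<close>;
  an explicit Pade-type computation bounds it by 5 (by 4, resp. 2, when \<open>deg q < deg p = 2\<close>,
  resp. \<open>1\<close>). Summing multiplicities, \<open>deg H\<close> is at most that bound times \<open>deg p\<close> plus 2,
  which is smaller than \<open>deg H\<close>.\<close>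

section \<open>Homogenised dynatomic polynomials\<close>

definition Phi1_hom :: "'a::comm_ring_1 \<Rightarrow> 'a \<Rightarrow> 'a \<Rightarrow> 'a" where
  "Phi1_hom a b t = a^2 - a*b + t*b^2"

definition Phi3_hom :: "'a::comm_ring_1 \<Rightarrow> 'a \<Rightarrow> 'a \<Rightarrow> 'a" where
  "Phi3_hom a b t = a^6 + a^5*b + (3*t+1)*a^4*b^2 + (2*t+1)*a^3*b^3 + (3*t^2+3*t+1)*a^2*b^4
     + (t+1)^2*a*b^5 + (t^3+2*t^2+t+1)*b^6"

lemma Phi1_hom_scale: "Phi1_hom (u*s) (v*s) t = s^2 * Phi1_hom u v (t::'a::idom)"
  unfolding Phi1_hom_def by algebra

lemma Phi3_hom_scale: "Phi3_hom (u*s) (v*s) t = s^6 * Phi3_hom u v (t::'a::idom)"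
  unfolding Phi3_hom_def by algebra

lemma Phi3_hom_horner:
  "Phi3_hom u 1 t =
     (((((u+1)*u + (3*t+1))*u + (2*t+1))*u + (3*t^2+3*t+1))*u + (t+1)^2)*u + (t^3+2*t^2+t+1::'a::idom)"
  unfolding Phi3_hom_def power_one mult_1_right by algebra

lemma Phi3_hom_Phi1_hom:
  "Phi3_hom a b t = Phi1_hom a b t *
     (a^4 + 2*a^3*b + (3+2*t)*a^2*b^2 + (4+2*t)*a*b^3 + (5+2*t+t^2)*b^4) + (6*a + (1-4*t)*b)*(b::'a::idom)^5"
  unfolding Phi3_hom_def Phi1_hom_def by algebra

definition Phi3_hom_divdiff :: "'a::comm_ring_1 \<Rightarrow> 'a \<Rightarrow> 'a \<Rightarrow> 'a \<Rightarrow> 'a" where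
  "Phi3_hom_divdiff a a' b t =
     (a^5 + a^4*a' + a^3*a'^2 + a^2*a'^3 + a*a'^4 + a'^5) + b*(a^4 + a^3*a' + a^2*a'^2 + a*a'^3 + a'^4)
     + (3*t+1)*b^2*(a^3 + a^2*a' + a*a'^2 + a'^3) + (2*t+1)*b^3*(a^2 + a*a' + a'^2)
     + (3*t^2+3*t+1)*b^4*(a + a') + (t+1)^2*b^5"

lemma Phi3_hom_diff: "Phi3_hom a b t - Phi3_hom a' b t = (a - a') * Phi3_hom_divdiff a a' b (t::'a::idom)"
  unfolding Phi3_hom_def Phi3_hom_divdiff_def by algebra

lemma additive_hom_numeral:
  assumes "\<And>x y. f (x + y) = f x + f y" and "f 1 = 1"
  shows "f (numeral n) = numeral n"
  by (induction n) (simp_all only: numeral_One numeral_Bit0 numeral_Bit1 assms)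

lemma multiplicative_hom_power:
  assumes "\<And>x y. f (x * y) = f x * f y" and "f 1 = 1"
  shows "f (x ^ n) = f x ^ n"
  by (induction n) (simp_all add: assms)

context
  fixes f :: "'a::comm_ring_1 \<Rightarrow> 'b::comm_ring_1"
  assumes add: "\<And>x y. f (x + y) = f x + f y"
    and mult: "\<And>x y. f (x * y) = f x * f y"
    and one: "f 1 = 1"
begin

lemma ring_hom_Phi3_hom: "f (Phi3_hom a b t) = Phi3_hom (f a) (f b) (f t)"
  unfolding Phi3_hom_def
  by (simp only: add mult one additive_hom_numeral[OF add one] multiplicative_hom_power[OF mult one])

lemma ring_hom_Phi1_hom: "f (Phi1_hom a b t) = Phi1_hom (f a) (f b) (f t)"
proof -
  have diff: "f (x - y) = f x - f y" for x y
    using add[of "x - y" y] by (simp add: eq_diff_eq)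
  show ?thesis
    unfolding Phi1_hom_def by (simp only: diff add mult multiplicative_hom_power[OF mult one])
qed

end

lemma poly_Phi3_hom: "poly (Phi3_hom p q t) c = Phi3_hom (poly p c) (poly q c) (poly t c)"
  by (rule ring_hom_Phi3_hom) simp_all

lemma poly_Phi1_hom: "poly (Phi1_hom p q t) c = Phi1_hom (poly p c) (poly q c) (poly t c)"
  by (rule ring_hom_Phi1_hom) simp_all

lemma pcompose_Phi3_hom:
  "pcompose (Phi3_hom p q t) (r :: 'a::idom poly) = Phi3_hom (pcompose p r) (pcompose q r) (pcompose t r)"
  by (rule ring_hom_Phi3_hom) (simp_all add: pcompose_add pcompose_mult pcompose_1)

lemma to_fract_Phi3_hom: "to_fract (Phi3_hom a b t) = Phi3_hom (to_fract a) (to_fract b) (to_fract t)"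
  by (rule ring_hom_Phi3_hom) simp_all

lemma to_fract_Phi1_hom: "to_fract (Phi1_hom a b t) = Phi1_hom (to_fract a) (to_fract b) (to_fract t)"
  by (rule ring_hom_Phi1_hom) simp_all

lemma degree_monomial_term_le:
  "degree (c * p^i * q^j) \<le> degree c + i * degree p + j * degree (q :: 'a::idom poly)"
proof -
  have "degree (c * p^i * q^j) \<le> degree c + degree (p^i) + degree (q^j)"
    by (meson add_le_mono1 degree_mult_le order_trans)
  also have "\<dots> \<le> degree c + i * degree p + j * degree q"
    using degree_power_le[of p i] degree_power_le[of q j] by (simp add: mult.commute)
  finally show ?thesis .
qed

lemma degree_Phi3_hom_mixed_terms_less:
  fixes p q :: "'a::idom poly"
  defines "X \<equiv> [:0,1:] :: 'a poly"
  shows "degree (p^5*q + (3*X+1)*p^4*q^2 + (2*X+1)*p^3*q^3 + (3*X^2+3*X+1)*p^2*q^4 + (X+1)^2*p*q^5)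
    < max (6 * degree p) (6 * degree q + 3)" (is "degree _ < ?D")
proof -
  have D_cases: "?D = (if degree q < degree p then 6 * degree p else 6 * degree q + 3)"
    by auto
  have bound: "degree (c * p^i * q^j) < ?D"
    if "degree c \<le> e" "e + i * degree p + j * degree q < ?D" for c :: "'a poly" and e i j
    using degree_monomial_term_le[of c p i q j] that by linarith
  have c1: "degree (3*X+1) \<le> 1" "degree (2*X+1) \<le> 1"
    by (simp_all add: X_def one_pCons numeral_poly)
  have c2: "degree (3*X^2+3*X+1) \<le> 2" "degree ((X+1)^2) \<le> 2"
    by (simp_all add: X_def one_pCons numeral_poly power2_eq_square)
  have "degree (1 * p^5 * q^1) < ?D"
    by (rule bound[of _ 0]) (auto simp: D_cases)
  moreover have "degree ((3*X+1) * p^4 * q^2) < ?D"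
    by (rule bound[OF c1(1)]) (auto simp: D_cases)
  moreover have "degree ((2*X+1) * p^3 * q^3) < ?D"
    by (rule bound[OF c1(2)]) (auto simp: D_cases)
  moreover have "degree ((3*X^2+3*X+1) * p^2 * q^4) < ?D"
    by (rule bound[OF c2(1)]) (auto simp: D_cases)
  moreover have "degree ((X+1)^2 * p^1 * q^5) < ?D"
    by (rule bound[OF c2(2)]) (auto simp: D_cases)
  ultimately show ?thesis
    by (simp add: degree_add_less)
qed

lemma degree_Phi3_hom:
  fixes p q :: "'a::idom poly"
  assumes "q \<noteq> 0"
  shows "degree (Phi3_hom p q [:0,1:]) = max (6 * degree p) (6 * degree q + 3)"
proof -
  let ?X = "[:0,1:] :: 'a poly"
  define A B C where "A = p^6"
    and "B = p^5*q + (3*?X+1)*p^4*q^2 + (2*?X+1)*p^3*q^3 + (3*?X^2+3*?X+1)*p^2*q^4 + (?X+1)^2*p*q^5"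
    and "C = (?X^3+2*?X^2+?X+1) * q^6"
  have split: "Phi3_hom p q ?X = A + B + C"
    unfolding A_def B_def C_def Phi3_hom_def by (simp only: add.assoc)
  have A: "degree A = 6 * degree p"
    unfolding A_def by (cases "p = 0") (simp_all add: degree_power_eq)
  have B: "degree B < max (6 * degree p) (6 * degree q + 3)"
    unfolding B_def by (rule degree_Phi3_hom_mixed_terms_less)
  have "degree (?X^3+2*?X^2+?X+1) = 3"
    by (simp add: one_pCons numeral_poly power2_eq_square power3_eq_cube)
  then have C: "degree C = 6 * degree q + 3"
    unfolding C_def using assms by (subst degree_mult_eq) (auto simp: degree_power_eq)
  show ?thesis
  proof (cases "degree q < degree p")
    case True
    then have "degree (B + C) < degree A"
      using A B C by (intro degree_add_less) auto
    then show ?thesis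
      using A True by (simp add: split add.assoc degree_add_eq_left)
  next
    case False
    then have "degree (A + B) < degree C"
      using A B C by (intro degree_add_less) auto
    then show ?thesis
      using C False by (simp add: split degree_add_eq_right)
  qed
qed

section \<open>Elements of \<open>K(t)\<close> in lowest terms\<close>

lemma Phi1_eq_Phi1_hom: "Phi1 z = Phi1_hom z 1 T"
  unfolding Phi1_def Phi1_hom_def by simp

lemma Phi3_eq_Phi3_hom: "Phi3 z = Phi3_hom z 1 T"
  unfolding Phi3_def Phi3_hom_def by (simp add: add.assoc)

lemma T_eq_to_fract: "T = to_fract [:0,1:]"
  unfolding T_def to_fract_def ..

lemma Phi3_Fract:
  fixes p q :: "'a::field poly"
  assumes "q \<noteq> 0"
  shows "Phi3 (Fract p q) = Fract (Phi3_hom p q [:0,1:]) (q^6)"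
proof -
  let ?P = "to_fract p" and ?Q = "to_fract q"
  have "Phi3_hom ?P ?Q T = ?Q^6 * Phi3 (?P / ?Q)"
    using Phi3_hom_scale[of "?P / ?Q" ?Q 1 T] assms by (simp add: Phi3_eq_Phi3_hom)
  then show ?thesis
    using assms by (simp add: Fract_conv_to_fract T_eq_to_fract to_fract_Phi3_hom
        multiplicative_hom_power nonzero_eq_divide_eq mult.commute)
qed

lemma Phi1_Fract:
  fixes p q :: "'a::field poly"
  assumes "q \<noteq> 0"
  shows "Phi1 (Fract p q) = Fract (Phi1_hom p q [:0,1:]) (q^2)"
proof -
  let ?P = "to_fract p" and ?Q = "to_fract q"
  have "Phi1_hom ?P ?Q T = ?Q^2 * Phi1 (?P / ?Q)"
    using Phi1_hom_scale[of "?P / ?Q" ?Q 1 T] assms by (simp add: Phi1_eq_Phi1_hom)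
  then show ?thesis
    using assms by (simp add: Fract_conv_to_fract T_eq_to_fract to_fract_Phi1_hom
        multiplicative_hom_power nonzero_eq_divide_eq mult.commute)
qed

lemma vanishes_at_Fract_iff:
  fixes N D :: "'a::field poly"
  assumes "D \<noteq> 0" and "poly D c \<noteq> 0"
  shows "vanishes_at c (Fract N D) \<longleftrightarrow> poly N c = 0"
proof (cases "N = 0")
  case True
  then show ?thesis by (simp add: vanishes_at_def fract_collapse)
next
  case False
  have order_eq: "int (order c p) - int (order c q) = int (order c N)"
    if "p \<noteq> 0" "q \<noteq> 0" "Fract N D = Fract p q" for p q
  proof -
    have "order c (N * q) = order c (p * D)"
      using that assms by (simp add: eq_fract)
    then show ?thesis
      using that False assms by (simp add: order_mult order_0I)
  qed
  have "Fract N D \<noteq> 0"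
    using False assms by (simp add: Zero_fract_def eq_fract)
  then have "vanishes_at c (Fract N D) \<longleftrightarrow>
      (\<exists>p q. p \<noteq> 0 \<and> q \<noteq> 0 \<and> Fract N D = Fract p q \<and> int (order c p) - int (order c q) > 0)"
    by (simp add: vanishes_at_def)
  also have "\<dots> \<longleftrightarrow> 0 < order c N"
  proof
    assume "\<exists>p q. p \<noteq> 0 \<and> q \<noteq> 0 \<and> Fract N D = Fract p q \<and> int (order c p) - int (order c q) > 0"
    then show "0 < order c N"
      using order_eq by fastforce
  next
    assume "0 < order c N"
    then show "\<exists>p q. p \<noteq> 0 \<and> q \<noteq> 0 \<and> Fract N D = Fract p q \<and> int (order c p) - int (order c q) > 0"
      using order_eq[of N D] False assms(1) by (intro exI[of _ N] exI[of _ D]) simp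
  qed
  finally show ?thesis
    using False by (simp add: order_root)
qed

lemma degree_eq_sum_order:
  fixes p :: "'a::alg_closed_field poly"
  assumes "p \<noteq> 0"
  shows "degree p = (\<Sum>x | poly p x = 0. order x p)"
proof -
  obtain A where A: "size A = degree p" "p = smult (lead_coeff p) (\<Prod>x\<in>#A. [:-x, 1:])"
    using alg_closed_imp_factorization[OF assms] by blast
  have "proots (\<Prod>x\<in>#A. [:-x, 1:]) = A"
  proof (induction A)
    case (add x A)
    have "(\<Prod>x\<in>#A. [:-x, 1::'a:]) \<noteq> 0"
      by (auto simp: prod_mset_zero_iff)
    then show ?case
      using add.IH by (simp add: proots_mult del: mult_pCons_left)
  qed simp
  then have "degree p = size (proots p)"
    using A assms by (metis leading_coeff_0_iff proots_smult)
  also have "\<dots> = (\<Sum>x\<in>set_mset (proots p). count (proots p) x)"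
    by (rule size_multiset_overloaded_eq)
  finally show ?thesis
    using assms by simp
qed

lemma height_Fract:
  fixes p q :: "'a::alg_closed_field poly"
  assumes "q \<noteq> 0" and "coprime p q"
  shows "height (Fract p q) = max (degree p) (degree q)"
  unfolding height_def
proof (rule the_equality)
  show "\<exists>p' q'. q' \<noteq> 0 \<and> coprime p' q' \<and> Fract p q = Fract p' q'
      \<and> max (degree p) (degree q) = max (degree p') (degree q')"
    using assms by blast
next
  fix n
  assume "\<exists>p' q'. q' \<noteq> 0 \<and> coprime p' q' \<and> Fract p q = Fract p' q' \<and> n = max (degree p') (degree q')"
  then obtain p' q' where q': "q' \<noteq> 0" "coprime p' q'" and eq: "p * q' = p' * q"
    and n: "n = max (degree p') (degree q')"
    using assms(1) by (auto simp: eq_fract)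
  show "n = max (degree p) (degree q)"
  proof (cases "p = 0")
    case True
    then have "p' = 0" "is_unit q" "is_unit q'"
      using eq assms q' by auto
    then show ?thesis
      using n True assms(1) q'(1) by (simp add: is_unit_iff_degree)
  next
    case False
    then have "p' \<noteq> 0"
      using eq q'(1) by auto
    have "order x q = order x q'" for x
    proof -
      have "order x p + order x q' = order x p' + order x q"
        using arg_cong[OF eq, of "order x"] False \<open>p' \<noteq> 0\<close> assms(1) q'(1) by (simp add: order_mult)
      moreover have "order x p = 0 \<or> order x q = 0"
        by (metis coprime_poly_0[OF assms(2)] order_0I)
      moreover have "order x p' = 0 \<or> order x q' = 0"
        by (metis coprime_poly_0[OF q'(2)] order_0I)
      ultimately show ?thesis
        by linarith
    qed
    moreover from this have "{x. poly q x = 0} = {x. poly q' x = 0}"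
      using assms(1) q'(1) by (auto simp: order_root)
    ultimately have "degree q = degree q'"
      by (simp add: degree_eq_sum_order[OF assms(1)] degree_eq_sum_order[OF q'(1)])
    moreover have "degree p + degree q' = degree p' + degree q"
      using arg_cong[OF eq, of degree] False \<open>p' \<noteq> 0\<close> assms(1) q'(1) by (simp add: degree_mult_eq)
    ultimately show ?thesis
      using n by simp
  qed
qed

lemma Fract_coprime_cases:
  fixes x :: "'a::field poly fract"
  obtains p q where "q \<noteq> 0" "coprime p q" "x = Fract p q"
proof -
  define good where "good n \<longleftrightarrow> (\<exists>a b. b \<noteq> 0 \<and> x = Fract a b \<and> degree b = n)" for n
  have "\<exists>n. good n"
    unfolding good_def by (cases x) auto
  then obtain a b where b: "b \<noteq> 0" "x = Fract a b" and minimal: "\<And>n. good n \<Longrightarrow> degree b \<le> n"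
    by (metis (mono_tags) LeastI_ex Least_le good_def)
  have "coprime a b"
  proof (rule coprimeI)
    fix d assume "d dvd a" "d dvd b"
    then obtain a' b' where a': "a = d * a'" and b': "b = d * b'"
      by (elim dvdE)
    with b have "d \<noteq> 0" "b' \<noteq> 0" by auto
    then have "good (degree b')"
      unfolding good_def using b a' b' by (auto simp: mult_fract_cancel)
    then have "degree d = 0"
      using minimal[of "degree b'"] b' \<open>d \<noteq> 0\<close> \<open>b' \<noteq> 0\<close> by (simp add: degree_mult_eq)
    then show "is_unit d"
      using \<open>d \<noteq> 0\<close> by (simp add: is_unit_iff_degree)
  qed
  with b show ?thesis using that by blast
qed

section \<open>The branch of \<open>\<Phi>\<^sub>3 = 0\<close> through \<open>(0, c)\<close>\<close>

lemma monom_1_6_dvdI: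
  assumes "coeff p 0 = 0" "coeff p 1 = 0" "coeff p 2 = 0" "coeff p 3 = 0" "coeff p 4 = 0" "coeff p 5 = 0"
  shows "monom 1 6 dvd p"
  unfolding monom_1_dvd_iff' using assms by (auto simp: less_Suc_eq numeral_eq_Suc)

text \<open>For a root \<open>x\<close> of \<open>x\<^sup>3 + 2x\<^sup>2 + x + 1\<close>, \<open>Phi3_branch x\<close> is the Taylor polynomial of order 5, in
  \<open>s = t - x\<close>, of the solution \<open>z(t)\<close> of \<open>\<Phi>\<^sub>3(z, t) = 0\<close> with \<open>z(x) = 0\<close>; its coefficients are reduced
  modulo the cubic. The polynomials \<open>Phi3_branch_horner\<close>\<open>k\<close> are the truncations modulo \<open>s\<^sup>6\<close> of the
  successive partial sums of the Horner form \<open>Phi3_hom_horner\<close> at \<open>z = Phi3_branch x\<close>.\<close>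

definition Phi3_branch :: "'a::comm_ring_1 \<Rightarrow> 'a poly" where
  "Phi3_branch x = [:0, -3 - 2*x - 2*x^2, -51 - 30*x - 94*x^2, -5190 - 2220*x - 9164*x^2,
     -669503 - 287686*x - 1174710*x^2, -96085418 - 41332820*x - 168615284*x^2:]"

definition Phi3_branch_horner2 :: "'a::comm_ring_1 \<Rightarrow> 'a poly" where
  "Phi3_branch_horner2 x = [:1 + 3*x, -2*x - 2*x^2, -42 - 22*x - 82*x^2, -4628 - 1956*x - 8140*x^2,
     -595954 - 256230*x - 1045474*x^2, -85512460 - 36785964*x - 150063172*x^2:]"

definition Phi3_branch_horner3 :: "'a::comm_ring_1 \<Rightarrow> 'a poly" where
  "Phi3_branch_horner3 x = [:1 + 2*x, 5 - 5*x + 4*x^2, 231 + 101*x + 386*x^2, 22676 + 9850*x + 39840*x^2,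
     2907797 + 1250649*x + 5103662*x^2, 417576344 + 179619462*x + 732792392*x^2:]"

definition Phi3_branch_horner4 :: "'a::comm_ring_1 \<Rightarrow> 'a poly" where
  "Phi3_branch_horner4 x = [:1 + 3*x + 3*x^2, 4 + 2*x + 2*x^2, 107 + 51*x + 182*x^2,
     10518 + 4544*x + 18510*x^2, 1352432 + 581489*x + 2373444*x^2,
     194231422 + 83549788*x + 340849390*x^2:]"

definition Phi3_branch_horner5 :: "'a::comm_ring_1 \<Rightarrow> 'a poly" where
  "Phi3_branch_horner5 x = [:1 + 2*x + x^2, -1 - 3*x - 11*x^2, -254 - 103*x - 453*x^2,
     -26937 - 11557*x - 47194*x^2, -3454128 - 1486202*x - 6061399*x^2,
     -496079560 - 213394807*x - 870562984*x^2:]"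

lemmas Phi3_branch_defs = Phi3_branch_def Phi3_branch_horner2_def Phi3_branch_horner3_def
  Phi3_branch_horner4_def Phi3_branch_horner5_def

lemma Phi3_branch_horner_steps:
  fixes x :: "'a::field_char_0"
  assumes "x^3 + 2*x^2 + x + 1 = 0"
  shows "monom 1 6 dvd (Phi3_branch x + 1) * Phi3_branch x + (3*[:x,1:] + 1) - Phi3_branch_horner2 x"
    and "monom 1 6 dvd Phi3_branch_horner2 x * Phi3_branch x + (2*[:x,1:] + 1) - Phi3_branch_horner3 x"
    and "monom 1 6 dvd Phi3_branch_horner3 x * Phi3_branch x + (3*[:x,1:]^2 + 3*[:x,1:] + 1)
           - Phi3_branch_horner4 x"
    and "monom 1 6 dvd Phi3_branch_horner4 x * Phi3_branch x + ([:x,1:] + 1)^2 - Phi3_branch_horner5 x"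
    and "monom 1 6 dvd Phi3_branch_horner5 x * Phi3_branch x + ([:x,1:]^3 + 2*[:x,1:]^2 + [:x,1:] + 1)"
  by ((rule monom_1_6_dvdI;
       simp add: Phi3_branch_defs coeff_mult numeral_poly eval_nat_numeral atMost_Suc
         power2_eq_square power3_eq_cube;
       (simp add: algebra_simps; fail | use assms in algebra))+)

lemma dvd_horner_step:
  fixes m :: "'a::comm_ring_1"
  assumes "m dvd A - B" and "m dvd B * U + C - D"
  shows "m dvd A * U + C - D"
proof -
  have "A * U + C - D = (A - B) * U + (B * U + C - D)"
    by (simp add: algebra_simps)
  then show ?thesis
    by (metis assms dvd_add dvd_mult2)
qed

lemma Phi3_branch_root:
  fixes x :: "'a::field_char_0"
  assumes "x^3 + 2*x^2 + x + 1 = 0"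
  shows "monom 1 6 dvd Phi3_hom (Phi3_branch x) 1 [:x,1:]"
proof -
  note steps = Phi3_branch_horner_steps[OF assms]
  have last_step: "monom 1 6 dvd Phi3_branch_horner5 x * Phi3_branch x
      + ([:x,1:]^3 + 2*[:x,1:]^2 + [:x,1:] + 1) - 0"
    using steps(5) by simp
  have "monom 1 6 dvd Phi3_hom (Phi3_branch x) 1 [:x,1:] - 0"
    unfolding Phi3_hom_horner
    by (rule dvd_horner_step[OF dvd_horner_step[OF dvd_horner_step[OF dvd_horner_step[OF
          steps(1) steps(2)] steps(3)] steps(4)] last_step])
  then show ?thesis
    by simp
qed

lemma monom_1_dvd_mult_cancel:
  fixes A G :: "'a::idom poly"
  assumes "monom 1 m dvd A * G" and "poly G 0 \<noteq> 0"
  shows "monom 1 m dvd A"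
proof (cases "A = 0")
  case False
  have "G \<noteq> 0"
    using assms(2) by auto
  then have "m \<le> order 0 A + order 0 G"
    using assms(1) False by (simp add: monom_1_dvd_iff order_mult)
  then show ?thesis
    using assms(2) False by (simp add: monom_1_dvd_iff order_0I)
qed simp

lemma Phi3_hom_contact_branch:
  fixes x :: "'a::field_char_0"
  assumes g: "x^3 + 2*x^2 + x + 1 = 0" and "coeff P 0 = 0" and "coeff Q 0 \<noteq> 0"
    and "monom 1 m dvd Phi3_hom P Q [:x,1:]" and "m \<le> 6"
  shows "monom 1 m dvd P - Phi3_branch x * Q"
proof -
  let ?U = "Phi3_branch x"
  have "monom 1 m dvd (monom 1 6 :: 'a poly)"
    using \<open>m \<le> 6\<close> by (metis le_add_diff_inverse mult_monom mult_1 dvd_triv_left)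
  also have "monom 1 6 dvd Phi3_hom (?U * Q) (1 * Q) [:x,1:]"
    unfolding Phi3_hom_scale using Phi3_branch_root[OF g] by simp
  finally have "monom 1 m dvd Phi3_hom P Q [:x,1:] - Phi3_hom (?U * Q) Q [:x,1:]"
    using assms(4) by (simp add: dvd_diff)
  then have divisible: "monom 1 m dvd (P - ?U * Q) * Phi3_hom_divdiff P (?U * Q) Q [:x,1:]"
    by (simp add: Phi3_hom_diff)
  txt \<open>The divided difference is a unit at \<open>s = 0\<close>, as \<open>\<partial>\<Phi>\<^sub>3/\<partial>z (0, x) = (x + 1)\<^sup>2 \<noteq> 0\<close>.\<close>
  have "x + 1 \<noteq> 0"
  proof
    assume "x + 1 = 0"
    then have "x = -1"
      by (simp add: eq_neg_iff_add_eq_0)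
    with g show False
      by simp
  qed
  have "poly P 0 = 0" "poly ?U 0 = 0"
    using assms(2) by (simp_all add: Phi3_branch_def poly_0_coeff_0)
  then have "poly (Phi3_hom_divdiff P (?U * Q) Q [:x,1:]) 0 = (x + 1)^2 * poly Q 0 ^ 5"
    by (simp add: Phi3_hom_divdiff_def)
  with \<open>x + 1 \<noteq> 0\<close> assms(3) have "poly (Phi3_hom_divdiff P (?U * Q) Q [:x,1:]) 0 \<noteq> 0"
    by (simp add: poly_0_coeff_0)
  with divisible show ?thesis
    by (rule monom_1_dvd_mult_cancel)
qed

lemma Phi3_branch_approx_2_2:
  fixes x :: "'a::field_char_0"
  assumes g: "x^3 + 2*x^2 + x + 1 = 0"
    and "degree P \<le> 2" and "degree Q \<le> 2" and "coeff Q 0 \<noteq> 0"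
  shows "\<not> monom 1 6 dvd P - Phi3_branch x * Q"
proof
  assume "monom 1 6 dvd P - Phi3_branch x * Q"
  then have coeffs: "coeff (P - Phi3_branch x * Q) k = 0" if "k \<in> {3, 4, 5}" for k
    using that by (auto simp: monom_1_dvd_iff')
  have high: "coeff P k = 0" "coeff Q k = 0" if "k > 2" for k
    using that assms(2,3) by (simp_all add: coeff_eq_0)
  have
    e3: "(-5190 - 2220*x - 9164*x^2) * coeff Q 0 + (-51 - 30*x - 94*x^2) * coeff Q 1
      + (-3 - 2*x - 2*x^2) * coeff Q 2 = 0" and
    e4: "(-669503 - 287686*x - 1174710*x^2) * coeff Q 0 + (-5190 - 2220*x - 9164*x^2) * coeff Q 1
      + (-51 - 30*x - 94*x^2) * coeff Q 2 = 0" and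
    e5: "(-96085418 - 41332820*x - 168615284*x^2) * coeff Q 0
      + (-669503 - 287686*x - 1174710*x^2) * coeff Q 1 + (-5190 - 2220*x - 9164*x^2) * coeff Q 2 = 0"
    using coeffs[of 3] coeffs[of 4] coeffs[of 5]
    by (simp_all add: coeff_mult Phi3_branch_def eval_nat_numeral atMost_Suc high, algebra+)
  txt \<open>Modulo the cubic, an integer multiple of \<open>coeff Q 0\<close> is a combination of \<open>e3, e4, e5\<close>
    (Cramer's rule for this linear system in the coefficients of \<open>Q\<close>, whose determinant is a unit in
    \<open>\<rat>[x]/(x\<^sup>3 + 2x\<^sup>2 + x + 1)\<close>); likewise for the two smaller systems below.\<close>
  have "40276558539828907975 * coeff Q 0 =
      (910172320307407243 - 3119751921206865534*x - 2074178317003460338*x^2)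
        * ((-5190 - 2220*x - 9164*x^2) * coeff Q 0 + (-51 - 30*x - 94*x^2) * coeff Q 1
           + (-3 - 2*x - 2*x^2) * coeff Q 2)
    + (2878671757027816159 + 3475335588572104358*x + 1045681239490881506*x^2)
        * ((-669503 - 287686*x - 1174710*x^2) * coeff Q 0 + (-5190 - 2220*x - 9164*x^2) * coeff Q 1
           + (-51 - 30*x - 94*x^2) * coeff Q 2)
    + (-106676477956947029 + 367569946143033002*x + 244095598010912614*x^2)
        * ((-96085418 - 41332820*x - 168615284*x^2) * coeff Q 0
           + (-669503 - 287686*x - 1174710*x^2) * coeff Q 1 + (-5190 - 2220*x - 9164*x^2) * coeff Q 2)"
    using g by algebra
  also have "\<dots> = 0"
    by (simp only: e3 e4 e5 mult_zero_right add_0)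
  finally show False
    using assms(4) by simp
qed

lemma Phi3_branch_approx_2_1:
  fixes x :: "'a::field_char_0"
  assumes g: "x^3 + 2*x^2 + x + 1 = 0"
    and "degree P \<le> 2" and "degree Q \<le> 1" and "coeff Q 0 \<noteq> 0"
  shows "\<not> monom 1 5 dvd P - Phi3_branch x * Q"
proof
  assume "monom 1 5 dvd P - Phi3_branch x * Q"
  then have coeffs: "coeff (P - Phi3_branch x * Q) k = 0" if "k \<in> {3, 4}" for k
    using that by (auto simp: monom_1_dvd_iff')
  have high: "coeff P k = 0" if "k > 2" for k
    using that assms(2) by (simp add: coeff_eq_0)
  have high': "coeff Q k = 0" if "k > 1" for k
    using that assms(3) by (simp add: coeff_eq_0)
  have
    e3: "(-5190 - 2220*x - 9164*x^2) * coeff Q 0 + (-51 - 30*x - 94*x^2) * coeff Q 1 = 0" and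
    e4: "(-669503 - 287686*x - 1174710*x^2) * coeff Q 0 + (-5190 - 2220*x - 9164*x^2) * coeff Q 1 = 0"
    using coeffs[of 3] coeffs[of 4]
    by (simp_all add: coeff_mult Phi3_branch_def eval_nat_numeral atMost_Suc high high', algebra+)
  have "15834489993617 * coeff Q 0 =
      (-712389435834 + 1919440631404*x + 1325797986852*x^2)
        * ((-5190 - 2220*x - 9164*x^2) * coeff Q 0 + (-51 - 30*x - 94*x^2) * coeff Q 1)
    + (-339874263699 - 426453257726*x - 132653776170*x^2)
        * ((-669503 - 287686*x - 1174710*x^2) * coeff Q 0 + (-5190 - 2220*x - 9164*x^2) * coeff Q 1)"
    using g by algebra
  also have "\<dots> = 0"
    by (simp only: e3 e4 mult_zero_right add_0)
  finally show False
    using assms(4) by simp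
qed

lemma Phi3_branch_approx_1_0:
  fixes x :: "'a::field_char_0"
  assumes g: "x^3 + 2*x^2 + x + 1 = 0"
    and "degree P \<le> 1" and "degree Q = 0" and "coeff Q 0 \<noteq> 0"
  shows "\<not> monom 1 3 dvd P - Phi3_branch x * Q"
proof
  assume "monom 1 3 dvd P - Phi3_branch x * Q"
  then have coeff2: "coeff (P - Phi3_branch x * Q) 2 = 0"
    by (simp add: monom_1_dvd_iff')
  have high: "coeff P k = 0" if "k > 1" for k
    using that assms(2) by (simp add: coeff_eq_0)
  have high': "coeff Q k = 0" if "k > 0" for k
    using that assms(3) by (simp add: coeff_eq_0)
  have e2: "(-51 - 30*x - 94*x^2) * coeff Q 0 = 0"
    using coeff2 by (simp add: coeff_mult Phi3_branch_def eval_nat_numeral atMost_Suc high high')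
  have "11095 * coeff Q 0 = (1627 + 2174*x + 698*x^2) * ((-51 - 30*x - 94*x^2) * coeff Q 0)"
    using g by algebra
  also have "\<dots> = 0"
    by (simp only: e2 mult_zero_right)
  finally show False
    using assms(4) by simp
qed

lemma monom_1_dvd_pcompose_shift:
  fixes H :: "'a::comm_ring_1 poly"
  assumes "[:-c, 1:] ^ m dvd H"
  shows "monom 1 m dvd pcompose H [:c, 1:]"
proof -
  obtain K where "H = [:-c, 1:] ^ m * K"
    using assms by (elim dvdE)
  then have "pcompose H [:c, 1:] = [:0, 1:] ^ m * pcompose K [:c, 1:]"
    by (simp add: pcompose_mult multiplicative_hom_power[of "\<lambda>p. pcompose p _"] pcompose_1
        pcompose_pCons)
  then show ?thesis
    by (simp add: monom_altdef)
qed

definition contact_bound :: "'a::zero poly \<Rightarrow> 'a poly \<Rightarrow> nat" where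
  "contact_bound p q = (if degree p \<le> degree q then 5 else if degree p = 2 then 4 else 2)"

lemma order_Phi3_hom_at_numerator_root:
  fixes p q :: "'a::field_char_0 poly"
  assumes "poly p c = 0" and "poly q c \<noteq> 0" and "degree p \<le> 2" and "degree q \<le> 2"
  shows "order c (Phi3_hom p q [:0,1:]) \<le> contact_bound p q"
proof (cases "poly (Phi3_hom p q [:0,1:]) c = 0")
  case False
  then show ?thesis
    by (simp add: order_0I)
next
  case True
  define P Q where "P = pcompose p [:c, 1:]" and "Q = pcompose q [:c, 1:]"
  have "Phi3_hom 0 (poly q c) c = 0"
    using True assms(1) by (simp add: poly_Phi3_hom)
  then have g: "c^3 + 2*c^2 + c + 1 = 0"
    using assms(2) by (simp add: Phi3_hom_def)
  have P0: "coeff P 0 = 0" and Q0: "coeff Q 0 \<noteq> 0"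
    using assms(1,2) by (simp_all add: P_def Q_def)
  have deg: "degree P = degree p" "degree Q = degree q"
    by (simp_all add: P_def Q_def degree_pcompose)
  have "\<not> [:-c, 1:] ^ Suc (contact_bound p q) dvd Phi3_hom p q [:0,1:]"
  proof
    let ?m = "Suc (contact_bound p q)"
    assume "[:-c, 1:] ^ ?m dvd Phi3_hom p q [:0,1:]"
    then have "monom 1 ?m dvd pcompose (Phi3_hom p q [:0,1:]) [:c, 1:]"
      by (rule monom_1_dvd_pcompose_shift)
    then have "monom 1 ?m dvd Phi3_hom P Q [:c, 1:]"
      by (simp add: pcompose_Phi3_hom P_def Q_def pcompose_pCons)
    then have "monom 1 ?m dvd P - Phi3_branch c * Q"
      by (rule Phi3_hom_contact_branch[OF g P0 Q0]) (simp add: contact_bound_def)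
    then show False
      using Phi3_branch_approx_2_2[OF g _ _ Q0] Phi3_branch_approx_2_1[OF g _ _ Q0]
        Phi3_branch_approx_1_0[OF g _ _ Q0] assms(3,4) deg
      by (auto simp: contact_bound_def split: if_splits)
  qed
  then show ?thesis
    by (auto simp only: order_divides not_less_eq_eq de_Morgan_disj)
qed

section \<open>Collisions with fixed points\<close>

lemma Phi3_hom_Phi1_hom_common_zero:
  fixes a b c :: "'a::field_char_0"
  assumes "Phi3_hom a b c = 0" and "Phi1_hom a b c = 0" and "a \<noteq> 0"
  shows "b \<noteq> 0" and "6*a = (4*c - 1)*b" and "16*c^2 + 4*c + 7 = 0"
proof -
  show "b \<noteq> 0"
    using assms(2,3) by (auto simp: Phi1_hom_def)
  moreover have "(6*a + (1 - 4*c)*b) * b^5 = 0"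
    using Phi3_hom_Phi1_hom[of a b c] assms(1,2) by simp
  ultimately have "6*a + (1 - 4*c)*b = 0"
    by simp
  then show collinear: "6*a = (4*c - 1)*b"
    by algebra
  then have "b^2 * (16*c^2 + 4*c + 7) = 36 * Phi1_hom a b c"
    unfolding Phi1_hom_def by algebra
  with \<open>b \<noteq> 0\<close> show "16*c^2 + 4*c + 7 = 0"
    using assms(2) by simp
qed

text \<open>At such a point both partial derivatives of \<open>\<Phi>\<^sub>3\<close> in \<open>z\<close> vanish, so only
  \<open>\<partial>\<Phi>\<^sub>3/\<partial>t\<close> contributes.\<close>

lemma pderiv_Phi3_hom_at_collision:
  fixes p q :: "'a::field_char_0 poly"
  assumes "6 * poly p c = (4*c - 1) * poly q c" and "16*c^2 + 4*c + 7 = 0"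
  shows "3 * poly (pderiv (Phi3_hom p q [:0,1:])) c = poly q c ^ 6 * (8*c - 2)"
  using assms unfolding Phi3_hom_def
  by (simp add: pderiv_add pderiv_mult pderiv_power pderiv_pCons numeral_poly pderiv_smult) algebra

lemma order_Phi3_hom_at_Phi1_root:
  fixes p q :: "'a::field_char_0 poly"
  assumes "poly (Phi3_hom p q [:0,1:]) c = 0" and "poly (Phi1_hom p q [:0,1:]) c = 0"
    and "poly p c \<noteq> 0"
  shows "16*c^2 + 4*c + 7 = 0" and "order c (Phi3_hom p q [:0,1:]) = 1"
proof -
  have "Phi3_hom (poly p c) (poly q c) c = 0" "Phi1_hom (poly p c) (poly q c) c = 0"
    using assms(1,2) by (simp_all add: poly_Phi3_hom poly_Phi1_hom)
  note collision = Phi3_hom_Phi1_hom_common_zero[OF this assms(3)]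
  show "16*c^2 + 4*c + 7 = 0"
    by (fact collision(3))
  have "8*c - 2 \<noteq> 0"
  proof
    assume "8*c - 2 = 0"
    then have "16*c^2 + 4*c + 7 = 9"
      by algebra
    with collision(3) show False
      by simp
  qed
  with collision(1) have "poly (pderiv (Phi3_hom p q [:0,1:])) c \<noteq> 0"
    using pderiv_Phi3_hom_at_collision[OF collision(2,3)] by auto
  moreover from this have "Phi3_hom p q [:0,1:] \<noteq> 0"
    by auto
  ultimately show "order c (Phi3_hom p q [:0,1:]) = 1"
    using order_pderiv[OF _ assms(1)] by (simp add: order_0I)
qed

section \<open>Counting zeros\<close>

lemma degree_le_by_root_orders:
  fixes H p E :: "'a::alg_closed_field poly"
  assumes "H \<noteq> 0" and "p \<noteq> 0" and "E \<noteq> 0"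
    and numerator_zero: "\<And>c. poly H c = 0 \<Longrightarrow> poly p c = 0 \<Longrightarrow> order c H \<le> M"
    and other_zero: "\<And>c. poly H c = 0 \<Longrightarrow> poly p c \<noteq> 0 \<Longrightarrow> poly E c = 0 \<and> order c H = 1"
  shows "degree H \<le> M * degree p + degree E"
proof -
  define Z ZP ZE where "Z = {c. poly H c = 0}" and "ZP = {c. poly p c = 0}" and "ZE = {c. poly E c = 0}"
  have finite_zeros: "finite Z" "finite ZP" "finite ZE"
    unfolding Z_def ZP_def ZE_def using assms(1-3) by (simp_all add: poly_roots_finite)
  have "(\<Sum>c\<in>Z \<inter> ZP. order c H) \<le> card (Z \<inter> ZP) * M"
    using sum_bounded_above[of "Z \<inter> ZP" "\<lambda>c. order c H" M] numerator_zero
    by (simp add: Z_def ZP_def)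
  also have "\<dots> \<le> degree p * M"
    using card_mono[OF finite_zeros(2), of "Z \<inter> ZP"] card_poly_roots_bound[OF assms(2)]
    by (simp add: ZP_def)
  finally have numerator_zeros: "(\<Sum>c\<in>Z \<inter> ZP. order c H) \<le> M * degree p"
    by (simp add: mult.commute)
  have "(\<Sum>c\<in>Z - ZP. order c H) = card (Z - ZP)" and "Z - ZP \<subseteq> ZE"
    using other_zero by (simp_all add: Z_def ZP_def ZE_def subset_iff)
  then have "(\<Sum>c\<in>Z - ZP. order c H) \<le> card ZE"
    using card_mono[OF finite_zeros(3)] by simp
  also have "\<dots> \<le> degree E"
    unfolding ZE_def by (rule card_poly_roots_bound[OF assms(3)])
  finally have other_zeros: "(\<Sum>c\<in>Z - ZP. order c H) \<le> degree E" .
  have "degree H = (\<Sum>c\<in>Z \<inter> ZP. order c H) + (\<Sum>c\<in>Z - ZP. order c H)"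
    using degree_eq_sum_order[OF assms(1)] finite_zeros(1) by (simp add: Z_def sum.Int_Diff)
  with numerator_zeros other_zeros show ?thesis
    by linarith
qed

lemma Phi3_hom_has_zero_off_Phi1_and_numerator:
  fixes p q :: "'a::{alg_closed_field, field_char_0} poly"
  assumes "coprime p q" and "q \<noteq> 0" and "max (degree p) (degree q) \<in> {1, 2}"
  shows "\<exists>c. poly (Phi3_hom p q [:0,1:]) c = 0 \<and> poly p c \<noteq> 0 \<and> poly (Phi1_hom p q [:0,1:]) c \<noteq> 0"
proof (rule ccontr)
  assume no_good_zero: "\<nexists>c. poly (Phi3_hom p q [:0,1:]) c = 0 \<and> poly p c \<noteq> 0
      \<and> poly (Phi1_hom p q [:0,1:]) c \<noteq> 0"
  have "p \<noteq> 0"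
  proof
    assume "p = 0"
    then have "is_unit q"
      using assms(1) by simp
    then show False
      using assms(2,3) \<open>p = 0\<close> by (simp add: is_unit_iff_degree)
  qed
  have degree_H: "contact_bound p q * degree p + 2 < degree (Phi3_hom p q [:0,1:])"
    using degree_Phi3_hom[OF assms(2)] assms(3) by (auto simp: contact_bound_def)
  then have "Phi3_hom p q [:0,1:] \<noteq> 0"
    by auto
  then have "degree (Phi3_hom p q [:0,1:]) \<le> contact_bound p q * degree p + degree [:7, 4, 16 :: 'a:]"
  proof (rule degree_le_by_root_orders[OF _ \<open>p \<noteq> 0\<close>])
    show "order c (Phi3_hom p q [:0,1:]) \<le> contact_bound p q"
      if "poly (Phi3_hom p q [:0,1:]) c = 0" and "poly p c = 0" for c
      using that order_Phi3_hom_at_numerator_root[of p c q] coprime_poly_0[OF assms(1), of c] assms(3)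
      by auto
    show "poly [:7, 4, 16:] c = 0 \<and> order c (Phi3_hom p q [:0,1:]) = 1"
      if "poly (Phi3_hom p q [:0,1:]) c = 0" and "poly p c \<noteq> 0" for c
      using that order_Phi3_hom_at_Phi1_root[of p q c] no_good_zero
      by (auto simp: algebra_simps power2_eq_square)
  qed simp
  with degree_H show False
    by simp
qed

theorem lemma5p10:
  fixes \<beta> :: "'a::{alg_closed_field, field_char_0} ratfun"
  assumes "height \<beta> = 1 \<or> height \<beta> = 2"
  shows "\<exists>c::'a. vanishes_at c (Phi3 \<beta>) \<and> \<not> vanishes_at c (Phi1 \<beta>) \<and> \<not> vanishes_at c \<beta>"
proof -
  obtain p q where q: "q \<noteq> 0" "coprime p q" and \<beta>: "\<beta> = Fract p q"
    by (rule Fract_coprime_cases)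
  have "max (degree p) (degree q) \<in> {1, 2}"
    using assms height_Fract[OF q] \<beta> by auto
  then obtain c where H: "poly (Phi3_hom p q [:0,1:]) c = 0" and p: "poly p c \<noteq> 0"
    and F: "poly (Phi1_hom p q [:0,1:]) c \<noteq> 0"
    using Phi3_hom_has_zero_off_Phi1_and_numerator[OF q(2,1)] by blast
  have "poly q c \<noteq> 0"
  proof
    assume "poly q c = 0"
    then have "poly (Phi3_hom p q [:0,1:]) c = poly p c ^ 6"
      by (simp add: poly_Phi3_hom Phi3_hom_def)
    with H p show False
      by simp
  qed
  then show ?thesis
    using H p F q(1) unfolding \<beta> Phi3_Fract[OF q(1)] Phi1_Fract[OF q(1)]
    by (intro exI[of _ c]) (simp add: vanishes_at_Fract_iff)
qed

end
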